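(* Let $G$ be finite and $z\in\mathbb C\setminus\{0\}$. The pairing $\langle\cdot,\cdot\rangle$ restricted to $\{f\in D_\infty:\mathcal Tf=zf\}\times\{\mu\in\mathrm{FA}(P):\mathcal T'\mu=z\mu\}$ is non-degenerate if and only if $\ker(S-z)=\ker(S-z)^k$ for all $k\ge1$, i.e. the eigenspace of $S$ for $z$ coincides with the generalized eigenspace of $S$ for $z$.
   Context: $G$ is a finite connected graph (no loops, no multiple edges, every vertex of degree $\ge2$); $E$ oriented edges, $\iota,\tau$, opposite $\bar e$; turn $e\rightsquigarrow e'$ iff $\tau(e)=\iota(e')$, $e'\ne\bar e$. $P$ = infinite paths $(e_1,e_2,\dots)$ with $e_i\rightsquigarrow e_{i+1}$; $(\mathcal Tf)(e_1,\dots)=\sum_{e_0\rightsquigarrow e_1}f(e_0,e_1,\dots)$. $S$ is the operator on $\mathrm{Map}(E)$ (all functions $E\to\mathbb C$), $(Sg)(e)=\sum_{e'\rightsquigarrow e}g(e')$. $D_m$ = functions on $P$ depending only on $e_1,\dots,e_m$, $D_\infty=\bigcup D_m$. Postal codes: finite paths $c=(c_1,\dots,c_m)$, $m\ge1$, with $c_i\rightsquigarrow c_{i+1}$; $\mathcal C_m$, $\mathcal C$; $\mathbf 1_c$ indicator of the paths beginning with $c$. $\mathrm{FA}(P)=\{\mu:\mathcal C\to\mathbb C:\mu(c)=\sum_{e:c_m\rightsquigarrow e}\mu(c,e)\ \forall c\}$. Pairing $\langle f,\mu\rangle=\sum_{c\in\mathcal C_m}f(c)\mu(c)$ for $f\in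 D_m$ ($f(c)$ the value of $f$ on paths beginning with $c$). $(\mathcal T'\mu)(c)=\langle\mathcal T\mathbf 1_c,\mu\rangle$. *)

theory Defs
  imports Complex_Main
begin

text \<open>A graph is given by a vertex set V and a symmetric irreflexive adjacency
relation adj. Oriented edges are pairs (u,v) with adj u v; iota = fst, tau = snd,
the opposite edge of (u,v) is (v,u).\<close>

definition oedges :: "('v \<Rightarrow> 'v \<Rightarrow> bool) \<Rightarrow> ('v \<times> 'v) set" where
  "oedges adj = {(u, v). adj u v}"

definition turn :: "('v \<Rightarrow> 'v \<Rightarrow> bool) \<Rightarrow> 'v \<times> 'v \<Rightarrow> 'v \<times> 'v \<Rightarrow> bool" where
  "turn adj e e' \<longleftrightarrow> e \<in> oedges adj \<and> e' \<in> oedges adj \<and> snd e = fst e' \<and> e' \<noteq> (snd e, fst e)"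

definition paths :: "('v \<Rightarrow> 'v \<Rightarrow> bool) \<Rightarrow> (nat \<Rightarrow> 'v \<times> 'v) set" where
  "paths adj = {p. \<forall>i. turn adj (p i) (p (Suc i))}"

definition postal :: "('v \<Rightarrow> 'v \<Rightarrow> bool) \<Rightarrow> ('v \<times> 'v) list set" where
  "postal adj = {c. c \<noteq> [] \<and> (\<forall>i<length c. c ! i \<in> oedges adj)
      \<and> (\<forall>i. Suc i < length c \<longrightarrow> turn adj (c ! i) (c ! Suc i))}"

definition postal_m :: "('v \<Rightarrow> 'v \<Rightarrow> bool) \<Rightarrow> nat \<Rightarrow> ('v \<times> 'v) list set" where
  "postal_m adj m = {c \<in> postal adj. length c = m}"

definition Tops :: "('v \<Rightarrow> 'v \<Rightarrow> bool) \<Rightarrow> ((nat \<Rightarrow> 'v \<times> 'v) \<Rightarrow> complex) \<Rightarrow> (nat \<Rightarrow> 'v \<times> 'v) \<Rightarrow> complex" where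
  "Tops adj f p = (\<Sum>e0 \<in> {e0. turn adj e0 (p 0)}. f (case_nat e0 p))"

definition Dm :: "('v \<Rightarrow> 'v \<Rightarrow> bool) \<Rightarrow> nat \<Rightarrow> ((nat \<Rightarrow> 'v \<times> 'v) \<Rightarrow> complex) \<Rightarrow> bool" where
  "Dm adj m f \<longleftrightarrow> (\<forall>p\<in>paths adj. \<forall>q\<in>paths adj. (\<forall>i<m. p i = q i) \<longrightarrow> f p = f q)"

definition Dinf :: "('v \<Rightarrow> 'v \<Rightarrow> bool) \<Rightarrow> ((nat \<Rightarrow> 'v \<times> 'v) \<Rightarrow> complex) \<Rightarrow> bool" where
  "Dinf adj f \<longleftrightarrow> (\<exists>m\<ge>1. Dm adj m f)"

definition extend :: "('v \<Rightarrow> 'v \<Rightarrow> bool) \<Rightarrow> ('v \<times> 'v) list \<Rightarrow> nat \<Rightarrow> 'v \<times> 'v" where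
  "extend adj c = (SOME p. p \<in> paths adj \<and> (\<forall>i<length c. p i = c ! i))"

definition valc :: "('v \<Rightarrow> 'v \<Rightarrow> bool) \<Rightarrow> ((nat \<Rightarrow> 'v \<times> 'v) \<Rightarrow> complex) \<Rightarrow> ('v \<times> 'v) list \<Rightarrow> complex" where
  "valc adj f c = f (extend adj c)"

definition indic :: "('v \<times> 'v) list \<Rightarrow> (nat \<Rightarrow> 'v \<times> 'v) \<Rightarrow> complex" where
  "indic c p = (if (\<forall>i<length c. p i = c ! i) then 1 else 0)"

definition FA :: "('v \<Rightarrow> 'v \<Rightarrow> bool) \<Rightarrow> (('v \<times> 'v) list \<Rightarrow> complex) set" where
  "FA adj = {\<mu>. \<forall>c\<in>postal adj. \<mu> c = (\<Sum>e\<in>{e. turn adj (last c) e}. \<mu> (c @ [e]))}"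

definition pairing_at :: "('v \<Rightarrow> 'v \<Rightarrow> bool) \<Rightarrow> nat \<Rightarrow> ((nat \<Rightarrow> 'v \<times> 'v) \<Rightarrow> complex) \<Rightarrow> (('v \<times> 'v) list \<Rightarrow> complex) \<Rightarrow> complex" where
  "pairing_at adj m f \<mu> = (\<Sum>c\<in>postal_m adj m. valc adj f c * \<mu> c)"

text \<open>The pairing for f in D_infinity, computed at the least m \<ge> 1 with f in D_m
(independent of the choice of m by finite additivity).\<close>
definition pairing :: "('v \<Rightarrow> 'v \<Rightarrow> bool) \<Rightarrow> ((nat \<Rightarrow> 'v \<times> 'v) \<Rightarrow> complex) \<Rightarrow> (('v \<times> 'v) list \<Rightarrow> complex) \<Rightarrow> complex" where
  "pairing adj f \<mu> = pairing_at adj (LEAST m. m \<ge> 1 \<and> Dm adj m f) f \<mu>"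

definition Tdual :: "('v \<Rightarrow> 'v \<Rightarrow> bool) \<Rightarrow> (('v \<times> 'v) list \<Rightarrow> complex) \<Rightarrow> ('v \<times> 'v) list \<Rightarrow> complex" where
  "Tdual adj \<mu> c = pairing adj (Tops adj (indic c)) \<mu>"

definition eigenD :: "('v \<Rightarrow> 'v \<Rightarrow> bool) \<Rightarrow> complex \<Rightarrow> ((nat \<Rightarrow> 'v \<times> 'v) \<Rightarrow> complex) set" where
  "eigenD adj z = {f. Dinf adj f \<and> (\<forall>p\<in>paths adj. Tops adj f p = z * f p)}"

definition eigenFA :: "('v \<Rightarrow> 'v \<Rightarrow> bool) \<Rightarrow> complex \<Rightarrow> (('v \<times> 'v) list \<Rightarrow> complex) set" where
  "eigenFA adj z = {\<mu> \<in> FA adj. \<forall>c\<in>postal adj. Tdual adj \<mu> c = z * \<mu> c}"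

text \<open>Non-degeneracy of the pairing on eigenD z \<times> eigenFA z (functions on P are
identified when equal on P, measures when equal on postal codes).\<close>
definition pairing_nondegenerate :: "('v \<Rightarrow> 'v \<Rightarrow> bool) \<Rightarrow> complex \<Rightarrow> bool" where
  "pairing_nondegenerate adj z \<longleftrightarrow>
     (\<forall>f\<in>eigenD adj z. (\<forall>\<mu>\<in>eigenFA adj z. pairing adj f \<mu> = 0) \<longrightarrow> (\<forall>p\<in>paths adj. f p = 0)) \<and>
     (\<forall>\<mu>\<in>eigenFA adj z. (\<forall>f\<in>eigenD adj z. pairing adj f \<mu> = 0) \<longrightarrow> (\<forall>c\<in>postal adj. \<mu> c = 0))"

definition Sop :: "('v \<Rightarrow> 'v \<Rightarrow> bool) \<Rightarrow> ('v \<times> 'v \<Rightarrow> complex) \<Rightarrow> 'v \<times> 'v \<Rightarrow> complex" where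
  "Sop adj g e = (if e \<in> oedges adj then (\<Sum>e'\<in>{e'. turn adj e' e}. g e') else 0)"

definition Sminus :: "('v \<Rightarrow> 'v \<Rightarrow> bool) \<Rightarrow> complex \<Rightarrow> ('v \<times> 'v \<Rightarrow> complex) \<Rightarrow> 'v \<times> 'v \<Rightarrow> complex" where
  "Sminus adj z g e = (if e \<in> oedges adj then Sop adj g e - z * g e else 0)"

text \<open>ker (S - z)^k, as a set of functions E \<rightarrow> C (extended by 0 outside E).\<close>
definition kerpow :: "('v \<Rightarrow> 'v \<Rightarrow> bool) \<Rightarrow> complex \<Rightarrow> nat \<Rightarrow> ('v \<times> 'v \<Rightarrow> complex) set" where
  "kerpow adj z k = {g. (\<forall>e. e \<notin> oedges adj \<longrightarrow> g e = 0) \<and> ((Sminus adj z ^^ k) g = (\<lambda>_. 0))}"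

end

theory Submission
  imports Defs "HOL-Library.Function_Algebras"
begin

text \<open>For \<open>z \<noteq> 0\<close>, an eigenfunction \<open>f \<in> D\<^sub>\<infinity>\<close> of \<open>T\<close> depends only on the first edge,
\<open>f p = g (p 0)\<close> with \<open>g \<in> ker (S - z)\<close>, and an eigenmeasure of \<open>T'\<close> is determined by its
values \<open>\<nu> e = \<mu> [e]\<close> through \<open>\<mu> c = \<nu> (last c) / z ^ (length c - 1)\<close>, with \<open>\<nu>\<close> in the
kernel of the transpose of \<open>S - z\<close>. Under these identifications the pairing becomes the
standard bilinear form \<open>\<Sum>\<^sub>e g e * \<nu> e\<close> on \<open>ker A \<times> ker A\<^sup>T\<close> for \<open>A = S - z\<close>. Since
\<open>ker A\<^sup>T\<close> is the annihilator of \<open>im A\<close>, this form is nondegenerate exactly when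
\<open>ker A \<inter> im A = 0\<close>, i.e. \<open>ker A = ker A\<^sup>2\<close>, which in turn gives \<open>ker A = ker A\<^sup>k\<close> for all \<open>k \<ge> 1\<close>.\<close>

section \<open>Linear algebra of a transposed pair\<close>

lemma (in vector_space) inj_on_endomorphism_surjective:
  assumes lin: "Vector_Spaces.linear scale scale f" and U: "subspace U" and D: "finite D" "U \<subseteq> span D"
    and fU: "f ` U \<subseteq> U" and inj: "inj_on f U"
  shows "f ` U = U"
proof
  interpret f: Vector_Spaces.linear scale scale f by (rule lin)
  obtain B where B: "B \<subseteq> U" "independent B" "U \<subseteq> span B"
    using maximal_independent_subset[of U] by blast
  have span_B: "span B \<subseteq> U" using B(1) U span_minimal by blast
  have "finite B" using independent_span_bound[OF D(1) B(2)] B(1) D(2) by blast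
  have indep: "independent (f ` B)"
    using f.independent_injective_image[OF B(2)] inj_on_subset[OF inj span_B] by blast
  have card: "card (f ` B) = card B" using card_image inj_on_subset[OF inj B(1)] by blast
  have "U \<subseteq> span (f ` B)"
  proof
    fix u assume u: "u \<in> U"
    show "u \<in> span (f ` B)"
    proof (rule ccontr)
      assume u_new: "u \<notin> span (f ` B)"
      have "insert u (f ` B) \<subseteq> span B" using u B(1,3) fU by auto
      then have "card (insert u (f ` B)) \<le> card B"
        using independent_span_bound[OF \<open>finite B\<close> independent_insertI[OF u_new indep]] by blast
      moreover have "u \<notin> f ` B" using u_new span_base by blast
      ultimately show False using card \<open>finite B\<close> by simp
    qed
  qed
  also have "\<dots> = f ` span B" by (rule f.span_image)
  also have "\<dots> \<subseteq> f ` U" using span_B by blast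
  finally show "U \<subseteq> f ` U" .
qed (rule fU)

lemma funpow_eq_zero_iff_kernel_stable:
  fixes A :: "'a \<Rightarrow> 'a::zero"
  assumes "A 0 = 0" and preserve: "\<And>h. P h \<Longrightarrow> P (A h)"
    and stable: "\<And>h. P h \<Longrightarrow> A (A h) = 0 \<Longrightarrow> A h = 0" and "P h" and "1 \<le> k"
  shows "(A ^^ k) h = 0 \<longleftrightarrow> A h = 0"
  using \<open>1 \<le> k\<close> \<open>P h\<close>
proof (induction k arbitrary: h rule: dec_induct)
  case (step k)
  have "(A ^^ Suc k) h = 0 \<longleftrightarrow> A (A h) = 0"
    using step.IH[OF preserve[OF step.prems]] by (simp only: funpow_Suc_right comp_apply)
  then show ?case using stable[OF step.prems] \<open>A 0 = 0\<close> by auto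
qed simp

lemma sum_apply: "(\<Sum>a\<in>S. f a) x = (\<Sum>a\<in>S. f a x)"
  by (induction S rule: infinite_finite_induct) auto

definition scale_fun :: "'a::times \<Rightarrow> ('e \<Rightarrow> 'a) \<Rightarrow> 'e \<Rightarrow> 'a" where
  "scale_fun c f = (\<lambda>x. c * f x)"

lemma vector_space_scale_fun: "vector_space (scale_fun :: 'a::field \<Rightarrow> _)"
  by unfold_locales (auto simp: scale_fun_def fun_eq_iff algebra_simps)

definition supported :: "'e set \<Rightarrow> ('e \<Rightarrow> 'a::zero) \<Rightarrow> bool" where
  "supported E g \<longleftrightarrow> (\<forall>x. x \<notin> E \<longrightarrow> g x = 0)"

definition dot_on :: "'e set \<Rightarrow> ('e \<Rightarrow> 'a::comm_semiring_0) \<Rightarrow> ('e \<Rightarrow> 'a) \<Rightarrow> 'a" where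
  "dot_on E g h = (\<Sum>e\<in>E. g e * h e)"

definition indicator_fun :: "'e \<Rightarrow> 'e \<Rightarrow> 'a::zero_neq_one" where
  "indicator_fun e0 = (\<lambda>x. if x = e0 then 1 else 0)"

lemma dot_on_commute: "dot_on E g h = dot_on E h g"
  unfolding dot_on_def by (simp add: mult.commute)

lemma dot_on_diff_left: "dot_on E (f - g) h = dot_on E f h - dot_on E g (h :: _ \<Rightarrow> 'a::comm_ring)"
  unfolding dot_on_def by (simp add: sum_subtractf algebra_simps)

lemma dot_on_zero_right [simp]: "dot_on E g 0 = 0"
  unfolding dot_on_def by simp

lemma dot_on_indicator_fun:
  "finite E \<Longrightarrow> e0 \<in> E \<Longrightarrow> dot_on E (indicator_fun e0) h = (h e0 :: 'a::comm_semiring_1)"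
  unfolding dot_on_def indicator_fun_def
  by (simp add: if_distrib[of "\<lambda>a. a * _"] sum.delta cong: if_cong)

lemma supported_indicator_fun: "e0 \<in> E \<Longrightarrow> supported E (indicator_fun e0)"
  unfolding supported_def indicator_fun_def by auto

lemma supported_eq_zero: "supported E g \<Longrightarrow> \<forall>e\<in>E. g e = 0 \<Longrightarrow> g = 0"
  unfolding supported_def by (auto simp: fun_eq_iff)

lemma finite_span_supported:
  assumes "finite E"
  shows "{g. supported E g} \<subseteq> module.span scale_fun (indicator_fun ` E :: ('e \<Rightarrow> 'a::field) set)"
proof
  interpret vector_space "scale_fun :: 'a \<Rightarrow> _" by (rule vector_space_scale_fun)
  fix g :: "'e \<Rightarrow> 'a" assume "g \<in> {g. supported E g}"
  then have "g = (\<Sum>e\<in>E. scale_fun (g e) (indicator_fun e))"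
    using assms by (auto simp: fun_eq_iff supported_def scale_fun_def indicator_fun_def sum_apply
      if_distrib cong: if_cong)
  also have "\<dots> \<in> span (indicator_fun ` E)"
    by (intro span_sum span_scale span_base) auto
  finally show "g \<in> span (indicator_fun ` E)" .
qed

locale transpose_pair =
  fixes E :: "'e set" and A B :: "('e \<Rightarrow> 'a::field) \<Rightarrow> 'e \<Rightarrow> 'a"
  assumes finite_E: "finite E"
    and linear_A: "Vector_Spaces.linear scale_fun scale_fun A"
    and linear_B: "Vector_Spaces.linear scale_fun scale_fun B"
    and supported_A: "supported E (A g)"
    and supported_B: "supported E (B g)"
    and adjoint: "dot_on E (A g) h = dot_on E g (B h)"
begin

interpretation A: Vector_Spaces.linear scale_fun scale_fun A by (rule linear_A)

lemma transpose_pair_swap: "transpose_pair E B A"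
proof -
  have "dot_on E (B g) h = dot_on E g (A h)" for g h
    using adjoint[of h g] by (simp only: dot_on_commute)
  then show ?thesis
    unfolding transpose_pair_def using finite_E linear_A linear_B supported_A supported_B by blast
qed

lemma supported_eq_zero_if_orthogonal:
  fixes g :: "'e \<Rightarrow> 'a"
  assumes "supported E g" "\<And>e. e \<in> E \<Longrightarrow> dot_on E (indicator_fun e) g = 0"
  shows "g = 0"
proof (rule supported_eq_zero[OF assms(1)], intro ballI)
  fix e assume "e \<in> E"
  then show "g e = 0" using assms(2)[of e] dot_on_indicator_fun[OF finite_E, of e g] by simp
qed

text \<open>If \<open>ker A = ker A\<^sup>2\<close> then \<open>A\<close> is injective on \<open>im A\<close>, hence by finite dimensionality
bijective there, so \<open>A h = A (A w)\<close> for some \<open>w\<close>.\<close>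

lemma kernel_plus_image:
  assumes stable: "\<And>h. supported E h \<Longrightarrow> A (A h) = 0 \<Longrightarrow> A h = 0" and h: "supported E h"
  shows "\<exists>w. supported E w \<and> A (h - A w) = 0"
proof -
  interpret vector_space "scale_fun :: 'a \<Rightarrow> _" by (rule vector_space_scale_fun)
  define W :: "('e \<Rightarrow> 'a) set" where "W = {g. supported E g}"
  have "subspace W" unfolding subspace_def W_def supported_def by (auto simp: scale_fun_def)
  then have U: "subspace (A ` W)" by (rule A.subspace_image)
  have AW: "A ` W \<subseteq> W" using supported_A by (auto simp: W_def)
  have "inj_on A (A ` W)"
    using stable A.inj_on_iff_eq_0[OF U] by (auto simp: W_def)
  moreover have "A ` W \<subseteq> span (indicator_fun ` E)"
    using AW finite_span_supported[OF finite_E] by (auto simp: W_def)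
  ultimately have "A ` A ` W = A ` W"
    using inj_on_endomorphism_surjective[OF linear_A U finite_imageI[OF finite_E]] AW by blast
  moreover have "A h \<in> A ` W" using h by (auto simp: W_def)
  ultimately obtain w where "w \<in> W" "A h = A (A w)" by auto
  then show ?thesis using A.diff by (auto simp: W_def)
qed

lemma kernel_stable_transpose:
  assumes stable: "\<And>h. supported E h \<Longrightarrow> A (A h) = 0 \<Longrightarrow> A h = 0"
    and "B (B \<nu>) = 0"
  shows "B \<nu> = 0"
proof (rule supported_eq_zero_if_orthogonal[OF supported_B])
  fix e assume "e \<in> E"
  then obtain w where "A (indicator_fun e - A w) = 0"
    using kernel_plus_image[OF stable supported_indicator_fun] by blast
  then have "A (indicator_fun e) = A (A w)" using A.diff by simp
  then have "dot_on E (indicator_fun e) (B \<nu>) = dot_on E (A w) (B \<nu>)"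
    by (simp flip: adjoint)
  also have "\<dots> = 0" using assms(2) by (simp add: adjoint)
  finally show "dot_on E (indicator_fun e) (B \<nu>) = 0" .
qed

text \<open>Write the indicator of \<open>e\<close> as \<open>k + A w\<close> with \<open>A k = 0\<close>; then \<open>A w\<close> is orthogonal to
\<open>ker B\<close>, so \<open>\<nu> e = \<langle>k, \<nu>\<rangle> = 0\<close>.\<close>

lemma orthogonal_to_kernel_eq_zero:
  assumes stable: "\<And>h. supported E h \<Longrightarrow> A (A h) = 0 \<Longrightarrow> A h = 0"
    and \<nu>: "supported E \<nu>" "B \<nu> = 0"
    and orth: "\<And>g. supported E g \<Longrightarrow> A g = 0 \<Longrightarrow> dot_on E g \<nu> = 0"
  shows "\<nu> = 0"
proof (rule supported_eq_zero_if_orthogonal[OF \<nu>(1)])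
  fix e assume e: "e \<in> E"
  then obtain w where w: "supported E w" "A (indicator_fun e - A w) = 0"
    using kernel_plus_image[OF stable supported_indicator_fun] by blast
  have "supported E (indicator_fun e - A w)"
    using supported_indicator_fun[OF e] supported_A by (auto simp: supported_def)
  then have "dot_on E (indicator_fun e - A w) \<nu> = 0" using orth w(2) by blast
  moreover have "dot_on E (A w) \<nu> = 0" using \<nu>(2) by (simp add: adjoint)
  ultimately show "dot_on E (indicator_fun e) \<nu> = 0" by (simp add: dot_on_diff_left)
qed

lemma kernel_stable_if_nondegenerate:
  assumes nondeg: "\<And>g. supported E g \<Longrightarrow> A g = 0 \<Longrightarrow>
      (\<And>\<nu>. supported E \<nu> \<Longrightarrow> B \<nu> = 0 \<Longrightarrow> dot_on E g \<nu> = 0) \<Longrightarrow> g = 0"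
    and "A (A h) = 0"
  shows "A h = 0"
  using nondeg[OF supported_A assms(2)] by (simp add: adjoint)

theorem kernel_pairing_nondegenerate_iff:
  "((\<forall>g. supported E g \<longrightarrow> A g = 0 \<longrightarrow>
        (\<forall>\<nu>. supported E \<nu> \<longrightarrow> B \<nu> = 0 \<longrightarrow> dot_on E g \<nu> = 0) \<longrightarrow> g = 0) \<and>
    (\<forall>\<nu>. supported E \<nu> \<longrightarrow> B \<nu> = 0 \<longrightarrow>
        (\<forall>g. supported E g \<longrightarrow> A g = 0 \<longrightarrow> dot_on E g \<nu> = 0) \<longrightarrow> \<nu> = 0))
   \<longleftrightarrow> (\<forall>h. supported E h \<longrightarrow> A (A h) = 0 \<longrightarrow> A h = 0)"
  (is "?left \<and> ?right \<longleftrightarrow> ?stable")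
proof
  assume "?left \<and> ?right"
  then show ?stable using kernel_stable_if_nondegenerate by blast
next
  assume stable: ?stable
  then have stable_B: "B (B \<nu>) = 0 \<Longrightarrow> B \<nu> = 0" for \<nu>
    using kernel_stable_transpose by blast
  have ?left
  proof (intro allI impI)
    fix g assume g: "supported E g" "A g = 0"
      and orth: "\<forall>\<nu>. supported E \<nu> \<longrightarrow> B \<nu> = 0 \<longrightarrow> dot_on E g \<nu> = 0"
    show "g = 0"
    proof (rule transpose_pair.orthogonal_to_kernel_eq_zero[OF transpose_pair_swap stable_B g])
      fix \<nu> assume "supported E \<nu>" "B \<nu> = 0"
      then show "dot_on E \<nu> g = 0" using orth by (simp only: dot_on_commute)
    qed
  qed
  moreover have ?right using orthogonal_to_kernel_eq_zero stable by blast
  ultimately show "?left \<and> ?right" ..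
qed

end

section \<open>Non-backtracking paths, postal codes and the pairing\<close>

lemma turn_in_oedges: "turn adj e e' \<Longrightarrow> e \<in> oedges adj \<and> e' \<in> oedges adj"
  by (simp add: turn_def)

lemma successively_iff_nth:
  "successively P xs \<longleftrightarrow> (\<forall>i. Suc i < length xs \<longrightarrow> P (xs ! i) (xs ! Suc i))"
proof (induction xs rule: induct_list012)
  case (3 x y zs)
  then show ?case by (auto simp: less_Suc_eq_0_disj)
qed auto

lemma postal_iff:
  "c \<in> postal adj \<longleftrightarrow> c \<noteq> [] \<and> set c \<subseteq> oedges adj \<and> successively (turn adj) c"
  unfolding postal_def successively_iff_nth by (auto simp: subset_code(1) all_set_conv_all_nth)

lemma postal_single: "[e] \<in> postal adj \<longleftrightarrow> e \<in> oedges adj"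
  by (simp add: postal_iff)

lemma postal_Cons_Cons: "a # b # r \<in> postal adj \<longleftrightarrow> turn adj a b \<and> b # r \<in> postal adj"
  by (auto simp: postal_iff dest: turn_in_oedges)

lemma postal_snoc: "c \<in> postal adj \<Longrightarrow> c @ [e] \<in> postal adj \<longleftrightarrow> turn adj (last c) e"
  by (auto simp: postal_iff successively_append_iff dest: turn_in_oedges)

lemma postal_butlast: "c @ [e] \<in> postal adj \<Longrightarrow> c \<noteq> [] \<Longrightarrow> c \<in> postal adj"
  by (auto simp: postal_iff successively_append_iff)

lemma postal_m_Suc:
  assumes "1 \<le> m"
  shows "postal_m adj (Suc m) =
    (\<lambda>(c, e). c @ [e]) ` (SIGMA c:postal_m adj m. {e. turn adj (last c) e})"
proof (intro equalityI subsetI)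
  fix d assume d: "d \<in> postal_m adj (Suc m)"
  then have "d = butlast d @ [last d]" "butlast d \<noteq> []"
    using assms by (auto simp: postal_m_def postal_iff dest!: length_Suc_conv_rev[THEN iffD1])
  then show "d \<in> (\<lambda>(c, e). c @ [e]) ` (SIGMA c:postal_m adj m. {e. turn adj (last c) e})"
    using d postal_butlast[of "butlast d" "last d"] postal_snoc[of "butlast d" adj "last d"]
    by (intro image_eqI[of _ _ "(butlast d, last d)"]) (auto simp: postal_m_def)
qed (auto simp: postal_m_def postal_snoc)

lemma path_in_oedges: "p \<in> paths adj \<Longrightarrow> p i \<in> oedges adj"
  unfolding paths_def using turn_in_oedges by blast

lemma case_nat_path: "p \<in> paths adj \<Longrightarrow> turn adj e0 (p 0) \<Longrightarrow> case_nat e0 p \<in> paths adj"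
  unfolding paths_def by (auto split: nat.split)

lemma DmI:
  "(\<And>p q. p \<in> paths adj \<Longrightarrow> q \<in> paths adj \<Longrightarrow> \<forall>i<m. p i = q i \<Longrightarrow> f p = f q) \<Longrightarrow> Dm adj m f"
  unfolding Dm_def by blast

lemma DmD:
  "Dm adj m f \<Longrightarrow> p \<in> paths adj \<Longrightarrow> q \<in> paths adj \<Longrightarrow> \<forall>i<m. p i = q i \<Longrightarrow> f p = f q"
  unfolding Dm_def by blast

lemma Dm_mono: "Dm adj m f \<Longrightarrow> m \<le> m' \<Longrightarrow> Dm adj m' f"
  unfolding Dm_def by (meson less_le_trans)

lemma Dm_indic: "Dm adj (length d) (indic d)"
  unfolding Dm_def indic_def by simp

lemma Dm_Tops:
  assumes "Dm adj (Suc m) f" and "1 \<le> m"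
  shows "Dm adj m (Tops adj f)"
proof (rule DmI)
  fix p q assume p: "p \<in> paths adj" and q: "q \<in> paths adj" and pq: "\<forall>i<m. p i = q i"
  have "p 0 = q 0" using pq assms(2) by simp
  have "f (case_nat e0 p) = f (case_nat e0 q)" if "turn adj e0 (q 0)" for e0
  proof -
    have "\<forall>i<Suc m. case_nat e0 p i = case_nat e0 q i" using pq by (auto split: nat.split)
    then show ?thesis
      using DmD[OF assms(1) case_nat_path[OF p] case_nat_path[OF q that]] that \<open>p 0 = q 0\<close>
      by simp
  qed
  then show "Tops adj f p = Tops adj f q"
    unfolding Tops_def \<open>p 0 = q 0\<close> by (intro sum.cong) auto
qed

text \<open>\<open>Tops\<close> lowers the depth by one, and an eigenfunction satisfies \<open>f = Tops f / z\<close>.\<close>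

lemma eigenD_Dm_1:
  assumes "z \<noteq> 0" and f: "f \<in> eigenD adj z"
  shows "Dm adj 1 f"
proof -
  have "Dm adj (Suc k) f \<Longrightarrow> Dm adj 1 f" for k
  proof (induction k)
    case (Suc k)
    then have "Dm adj (Suc k) (Tops adj f)" by (intro Dm_Tops) simp_all
    moreover have "Tops adj f p = z * f p" if "p \<in> paths adj" for p
      using f that unfolding eigenD_def by blast
    ultimately have "Dm adj (Suc k) f"
      using \<open>z \<noteq> 0\<close> by (intro DmI) (metis DmD mult_cancel_left)
    then show ?case by (rule Suc.IH)
  qed simp
  moreover obtain m where "1 \<le> m" "Dm adj m f" using f unfolding eigenD_def Dinf_def by blast
  then have "Dm adj (Suc (m - 1)) f" by simp
  ultimately show ?thesis by blast
qed

locale nonbacktracking_graph =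
  fixes adj :: "'v \<Rightarrow> 'v \<Rightarrow> bool"
  assumes finite_oedges: "finite (oedges adj)"
    and turn_exists: "e \<in> oedges adj \<Longrightarrow> \<exists>e'. turn adj e e'"
begin

lemma finite_turn_from: "finite {e'. turn adj e e'}"
  by (rule finite_subset[OF _ finite_oedges]) (auto dest: turn_in_oedges)

lemma finite_turn_to: "finite {e'. turn adj e' e}"
  by (rule finite_subset[OF _ finite_oedges]) (auto dest: turn_in_oedges)

lemma sum_turn_from:
  "(\<Sum>e'\<in>{e'. turn adj e e'}. g e') = (\<Sum>e'\<in>oedges adj. if turn adj e e' then g e' else 0)"
  using sum.inter_filter[OF finite_oedges, of g "turn adj e"] turn_in_oedges
  by (metis (no_types, lifting) Collect_cong)

lemma sum_turn_to:
  "(\<Sum>e'\<in>{e'. turn adj e' e}. g e') = (\<Sum>e'\<in>oedges adj. if turn adj e' e then g e' else 0)"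
  using sum.inter_filter[OF finite_oedges, of g "\<lambda>e'. turn adj e' e"] turn_in_oedges
  by (metis (no_types, lifting) Collect_cong)

lemma finite_postal_m: "finite (postal_m adj m)"
proof (rule finite_subset)
  show "postal_m adj m \<subseteq> {xs. set xs \<subseteq> oedges adj \<and> length xs = m}"
    by (auto simp: postal_m_def postal_iff)
qed (rule finite_lists_length_eq[OF finite_oedges])

lemma postal_extends_to_path:
  assumes c: "c \<in> postal adj"
  shows "\<exists>p\<in>paths adj. \<forall>i<length c. p i = c ! i"
proof -
  obtain nxt where nxt: "\<And>e. e \<in> oedges adj \<Longrightarrow> turn adj e (nxt e)"
    using turn_exists by metis
  have nxt_iter: "turn adj ((nxt ^^ n) e) ((nxt ^^ Suc n) e)" if "e \<in> oedges adj" for n e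
  proof -
    have "(nxt ^^ n) e \<in> oedges adj"
      using that by (induction n) (auto dest: nxt turn_in_oedges)
    then show ?thesis using nxt by simp
  qed
  have last_c: "last c \<in> oedges adj" and ne: "c \<noteq> []" using c by (auto simp: postal_iff)
  define p where "p i = (if i < length c then c ! i else (nxt ^^ (Suc i - length c)) (last c))" for i
  have "turn adj (p i) (p (Suc i))" for i
  proof (cases rule: linorder_cases[of "Suc i" "length c"])
    case less
    then show ?thesis using c by (simp add: p_def postal_def)
  next
    case equal
    then have "i = length c - 1" by simp
    then show ?thesis using nxt[OF last_c] ne by (simp add: p_def last_conv_nth)
  next
    case greater
    then show ?thesis using nxt_iter[OF last_c, of "Suc i - length c"] by (simp add: p_def Suc_diff_le)
  qed
  then show ?thesis by (intro bexI[of _ p]) (auto simp: paths_def p_def)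
qed

lemma extend_postal:
  "c \<in> postal adj \<Longrightarrow> extend adj c \<in> paths adj \<and> (\<forall>i<length c. extend adj c i = c ! i)"
  unfolding extend_def using postal_extends_to_path by (rule someI2_bex) blast

lemma extend_single: "e \<in> oedges adj \<Longrightarrow> extend adj [e] \<in> paths adj \<and> extend adj [e] 0 = e"
  using extend_postal[of "[e]"] postal_single[of e adj] by simp

lemma Dm_1_eq_first_edge:
  assumes "Dm adj 1 f" and p: "p \<in> paths adj"
  shows "f p = f (extend adj [p 0])"
  using DmD[OF assms(1) p] extend_single[OF path_in_oedges[OF p]] by simp

lemma valc_snoc:
  assumes "Dm adj (length c) f" and c: "c \<in> postal adj" and ce: "c @ [e] \<in> postal adj"
  shows "valc adj f (c @ [e]) = valc adj f c"
  using DmD[OF assms(1)] extend_postal[OF c] extend_postal[OF ce]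
  by (simp add: valc_def nth_append)

lemma pairing_at_Suc:
  assumes \<mu>: "\<mu> \<in> FA adj" and "1 \<le> m" and f: "Dm adj m f"
  shows "pairing_at adj (Suc m) f \<mu> = pairing_at adj m f \<mu>"
proof -
  have "pairing_at adj (Suc m) f \<mu> =
      (\<Sum>(c, e)\<in>(SIGMA c:postal_m adj m. {e. turn adj (last c) e}). valc adj f (c @ [e]) * \<mu> (c @ [e]))"
    unfolding pairing_at_def postal_m_Suc[OF \<open>1 \<le> m\<close>]
    by (subst sum.reindex) (auto simp: inj_on_def case_prod_unfold)
  also have "\<dots> = (\<Sum>c\<in>postal_m adj m. \<Sum>e\<in>{e. turn adj (last c) e}. valc adj f (c @ [e]) * \<mu> (c @ [e]))"
    by (subst sum.Sigma) (simp_all add: finite_postal_m finite_turn_from)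
  also have "\<dots> = (\<Sum>c\<in>postal_m adj m. \<Sum>e\<in>{e. turn adj (last c) e}. valc adj f c * \<mu> (c @ [e]))"
  proof (intro sum.cong refl)
    fix c e assume "c \<in> postal_m adj m" "e \<in> {e. turn adj (last c) e}"
    then show "valc adj f (c @ [e]) * \<mu> (c @ [e]) = valc adj f c * \<mu> (c @ [e])"
      using valc_snoc[of c f e] postal_snoc[of c adj e] f by (simp add: postal_m_def)
  qed
  also have "\<dots> = pairing_at adj m f \<mu>"
    using \<mu> unfolding pairing_at_def FA_def postal_m_def by (simp add: sum_distrib_left)
  finally show ?thesis .
qed

lemma pairing_eq_pairing_at:
  assumes \<mu>: "\<mu> \<in> FA adj" and "1 \<le> m" and f: "Dm adj m f"
  shows "pairing adj f \<mu> = pairing_at adj m f \<mu>"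
proof -
  define m0 where "m0 = (LEAST m. 1 \<le> m \<and> Dm adj m f)"
  have m0: "1 \<le> m0 \<and> Dm adj m0 f" unfolding m0_def by (rule LeastI[of _ m]) (use assms in simp)
  have "m0 \<le> m" unfolding m0_def by (rule Least_le) (use assms in simp)
  then have "pairing_at adj m f \<mu> = pairing_at adj m0 f \<mu>"
  proof (induction m rule: dec_induct)
    case (step k)
    have "Dm adj k f" using Dm_mono m0 step.hyps(1) by blast
    then show ?case using pairing_at_Suc[OF \<mu>, of k f] m0 step by simp
  qed simp
  then show ?thesis by (simp add: pairing_def m0_def)
qed

lemma pairing_Dm_1:
  assumes "Dm adj 1 f"
  shows "pairing adj f \<mu> = (\<Sum>e\<in>oedges adj. f (extend adj [e]) * \<mu> [e])"
proof -
  have "(LEAST m. 1 \<le> m \<and> Dm adj m f) = 1" using assms by (intro Least_equality) auto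
  moreover have "postal_m adj 1 = (\<lambda>e. [e]) ` oedges adj"
    by (auto simp: postal_m_def postal_single length_Suc_conv)
  ultimately show ?thesis
    unfolding pairing_def pairing_at_def valc_def by (simp add: sum.reindex inj_on_def)
qed

lemma pairing_indic:
  assumes \<mu>: "\<mu> \<in> FA adj" and d: "d \<in> postal adj"
  shows "pairing adj (indic d) \<mu> = \<mu> d"
proof -
  have valc: "valc adj (indic d) c * \<mu> c = (if c = d then \<mu> c else 0)"
    if "c \<in> postal_m adj (length d)" for c
    using extend_postal[of c] that by (auto simp: postal_m_def valc_def indic_def list_eq_iff_nth_eq)
  have "1 \<le> length d" using d by (simp add: postal_iff Suc_leI)
  then have "pairing adj (indic d) \<mu> = (\<Sum>c\<in>postal_m adj (length d). if c = d then \<mu> c else 0)"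
    using pairing_eq_pairing_at[OF \<mu> _ Dm_indic] by (simp add: pairing_at_def valc cong: sum.cong)
  also have "\<dots> = \<mu> d" using d finite_postal_m by (simp add: postal_m_def)
  finally show ?thesis .
qed

lemma Tops_indic_Cons_Cons:
  assumes "turn adj a b"
  shows "Tops adj (indic (a # b # r)) = indic (b # r)"
proof
  fix p
  have "indic (a # b # r) (case_nat e0 p) = (if e0 = a then indic (b # r) p else 0)" for e0
    unfolding indic_def length_Cons All_less_Suc2 by simp
  moreover have "indic (b # r) p = 0" if "\<not> turn adj a (p 0)"
    using that assms unfolding indic_def by auto
  ultimately show "Tops adj (indic (a # b # r)) p = indic (b # r) p"
    unfolding Tops_def using finite_turn_to by (auto simp: sum.delta')
qed

lemma Tops_indic_single: "Tops adj (indic [e]) = (\<lambda>p. if turn adj e (p 0) then 1 else 0)"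
proof
  fix p
  have "indic [e] (case_nat e0 p) = (if e0 = e then 1 else 0)" for e0
    unfolding indic_def by simp
  then show "Tops adj (indic [e]) p = (if turn adj e (p 0) then 1 else 0)"
    unfolding Tops_def using finite_turn_to by (simp add: sum.delta')
qed

lemma Tdual_Cons_Cons:
  assumes "\<mu> \<in> FA adj" and "a # b # r \<in> postal adj"
  shows "Tdual adj \<mu> (a # b # r) = \<mu> (b # r)"
  using assms Tops_indic_Cons_Cons pairing_indic by (simp add: Tdual_def postal_Cons_Cons)

lemma Tdual_single:
  assumes "e \<in> oedges adj"
  shows "Tdual adj \<mu> [e] = (\<Sum>e'\<in>{e'. turn adj e e'}. \<mu> [e'])"
proof -
  have "Dm adj 1 (\<lambda>p. if turn adj e (p 0) then 1 else 0 :: complex)" by (rule DmI) simp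
  then have "Tdual adj \<mu> [e] =
      (\<Sum>e'\<in>oedges adj. (if turn adj e (extend adj [e'] 0) then 1 else 0) * \<mu> [e'])"
    unfolding Tdual_def Tops_indic_single by (rule pairing_Dm_1)
  also have "\<dots> = (\<Sum>e'\<in>oedges adj. if turn adj e e' then \<mu> [e'] else 0)"
    by (intro sum.cong refl) (simp add: extend_single)
  also have "\<dots> = (\<Sum>e'\<in>{e'. turn adj e e'}. \<mu> [e'])" by (simp add: sum_turn_from)
  finally show ?thesis .
qed

end

section \<open>Eigenfunctions and eigenmeasures\<close>

definition Sminus_dual :: "('v \<Rightarrow> 'v \<Rightarrow> bool) \<Rightarrow> complex \<Rightarrow> ('v \<times> 'v \<Rightarrow> complex) \<Rightarrow> 'v \<times> 'v \<Rightarrow> complex" where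
  "Sminus_dual adj z \<nu> e =
    (if e \<in> oedges adj then (\<Sum>e'\<in>{e'. turn adj e e'}. \<nu> e') - z * \<nu> e else 0)"

definition first_edge_fun ::
    "('v \<Rightarrow> 'v \<Rightarrow> bool) \<Rightarrow> ((nat \<Rightarrow> 'v \<times> 'v) \<Rightarrow> complex) \<Rightarrow> 'v \<times> 'v \<Rightarrow> complex" where
  "first_edge_fun adj f e = (if e \<in> oedges adj then f (extend adj [e]) else 0)"

definition single_edge_measure ::
    "('v \<Rightarrow> 'v \<Rightarrow> bool) \<Rightarrow> (('v \<times> 'v) list \<Rightarrow> complex) \<Rightarrow> 'v \<times> 'v \<Rightarrow> complex" where
  "single_edge_measure adj \<mu> e = (if e \<in> oedges adj then \<mu> [e] else 0)"

text \<open>Solutions of \<open>Tdual \<mu> = z \<mu>\<close> satisfy \<open>\<mu> (a # c) = \<mu> c / z\<close>, so they decay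
geometrically along a postal code from its last edge.\<close>

definition geometric_measure :: "complex \<Rightarrow> ('e \<Rightarrow> complex) \<Rightarrow> 'e list \<Rightarrow> complex" where
  "geometric_measure z \<nu> c = \<nu> (last c) / z ^ (length c - 1)"

lemma supported_first_edge_fun: "supported (oedges adj) (first_edge_fun adj f)"
  by (simp add: supported_def first_edge_fun_def)

lemma supported_single_edge_measure: "supported (oedges adj) (single_edge_measure adj \<mu>)"
  by (simp add: supported_def single_edge_measure_def)

lemma single_edge_measure_geometric:
  "supported (oedges adj) \<nu> \<Longrightarrow> single_edge_measure adj (geometric_measure z \<nu>) = \<nu>"
  by (auto simp: fun_eq_iff single_edge_measure_def geometric_measure_def supported_def)

lemma path_fun_eigenD:
  assumes "Sminus adj z g = 0"
  shows "(\<lambda>p. g (p 0)) \<in> eigenD adj z"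
  unfolding eigenD_def Dinf_def
proof (intro CollectI conjI ballI exI[of _ 1])
  fix p assume "p \<in> paths adj"
  moreover have "Sminus adj z g (p 0) = 0" using assms by simp
  ultimately show "Tops adj (\<lambda>p. g (p 0)) p = z * g (p 0)"
    using path_in_oedges[of p adj 0] unfolding Tops_def Sminus_def Sop_def by simp
qed (auto intro: DmI)

context nonbacktracking_graph
begin

lemma transpose_pair_Sminus: "transpose_pair (oedges adj) (Sminus adj z) (Sminus_dual adj z)"
proof
  show "dot_on (oedges adj) (Sminus adj z g) \<nu> = dot_on (oedges adj) g (Sminus_dual adj z \<nu>)" for g \<nu>
  proof -
    have "(\<Sum>e\<in>oedges adj. (\<Sum>e'\<in>oedges adj. if turn adj e' e then g e' else 0) * \<nu> e) =
        (\<Sum>e'\<in>oedges adj. g e' * (\<Sum>e\<in>oedges adj. if turn adj e' e then \<nu> e else 0))"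
      by (simp add: sum_distrib_left sum_distrib_right if_distrib[of "\<lambda>x. x * _"]
          if_distrib[of "\<lambda>x. _ * x"] cong: if_cong) (rule sum.swap)
    then show ?thesis
      unfolding dot_on_def Sminus_def Sop_def Sminus_dual_def sum_turn_to sum_turn_from
      by (simp add: sum_subtractf sum_distrib_left algebra_simps)
  qed
qed (use finite_oedges in \<open>auto simp: Vector_Spaces.linear_iff vector_space_scale_fun supported_def
      scale_fun_def fun_eq_iff Sminus_def Sminus_dual_def Sop_def sum.distrib sum_distrib_left algebra_simps\<close>)

lemma first_edge_fun_path_fun:
  "supported (oedges adj) g \<Longrightarrow> first_edge_fun adj (\<lambda>p. g (p 0)) = g"
  by (auto simp: fun_eq_iff first_edge_fun_def supported_def extend_single)

lemma pairing_Dm_1_dot_on: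
  "Dm adj 1 f \<Longrightarrow>
    pairing adj f \<mu> = dot_on (oedges adj) (first_edge_fun adj f) (single_edge_measure adj \<mu>)"
  by (simp add: pairing_Dm_1 dot_on_def first_edge_fun_def single_edge_measure_def)

end

locale nonbacktracking_eigen = nonbacktracking_graph +
  fixes z :: complex
  assumes z_nonzero: "z \<noteq> 0"
begin

lemma eigenD_eq_first_edge:
  assumes f: "f \<in> eigenD adj z" and p: "p \<in> paths adj"
  shows "f p = first_edge_fun adj f (p 0)"
  using Dm_1_eq_first_edge[OF eigenD_Dm_1[OF z_nonzero f] p] path_in_oedges[OF p]
  by (simp add: first_edge_fun_def)

lemma Sminus_first_edge_fun:
  assumes f: "f \<in> eigenD adj z"
  shows "Sminus adj z (first_edge_fun adj f) = 0"
proof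
  fix e show "Sminus adj z (first_edge_fun adj f) e = 0 e"
  proof (cases "e \<in> oedges adj")
    case True
    define p where "p = extend adj [e]"
    have p: "p \<in> paths adj" "p 0 = e" using extend_single[OF True] by (auto simp: p_def)
    have "Tops adj f p = (\<Sum>e0\<in>{e0. turn adj e0 e}. first_edge_fun adj f e0)"
      unfolding Tops_def p(2)[symmetric]
      by (intro sum.cong refl) (simp add: eigenD_eq_first_edge[OF f] case_nat_path[OF p(1)])
    moreover have "Tops adj f p = z * first_edge_fun adj f e"
      using f p eigenD_eq_first_edge[OF f p(1)] unfolding eigenD_def by simp
    ultimately show ?thesis using True by (simp add: Sminus_def Sop_def)
  qed (simp add: Sminus_def)
qed

lemma eigenFA_Cons:
  assumes \<mu>: "\<mu> \<in> eigenFA adj z"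
  shows "a # c \<in> postal adj \<Longrightarrow> \<mu> (a # c) = \<mu> [last (a # c)] / z ^ length c"
proof (induction c arbitrary: a)
  case (Cons b r)
  have "z * \<mu> (a # b # r) = Tdual adj \<mu> (a # b # r)"
    using \<mu> Cons.prems unfolding eigenFA_def by simp
  also have "\<dots> = \<mu> (b # r)"
    using \<mu> Cons.prems Tdual_Cons_Cons unfolding eigenFA_def by blast
  finally have "z * \<mu> (a # b # r) = \<mu> (b # r)" .
  moreover have "\<mu> (b # r) = \<mu> [last (b # r)] / z ^ length r"
    using Cons.IH Cons.prems by (simp add: postal_Cons_Cons)
  ultimately show ?case using z_nonzero by (simp add: field_simps)
qed simp

lemma eigenFA_eq_geometric:
  assumes "\<mu> \<in> eigenFA adj z" and c: "c \<in> postal adj"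
  shows "\<mu> c = geometric_measure z (single_edge_measure adj \<mu>) c"
proof -
  obtain a r where "c = a # r" using c by (cases c) (auto simp: postal_iff)
  moreover have "last c \<in> oedges adj" using c by (auto simp: postal_iff)
  ultimately show ?thesis
    using eigenFA_Cons[OF assms(1)] c
    by (simp add: geometric_measure_def single_edge_measure_def)
qed

lemma Sminus_dual_single_edge_measure:
  assumes \<mu>: "\<mu> \<in> eigenFA adj z"
  shows "Sminus_dual adj z (single_edge_measure adj \<mu>) = 0"
proof
  fix e show "Sminus_dual adj z (single_edge_measure adj \<mu>) e = 0 e"
  proof (cases "e \<in> oedges adj")
    case True
    have "Tdual adj \<mu> [e] = z * \<mu> [e]"
      using \<mu> True unfolding eigenFA_def by (simp add: postal_single)
    then have "(\<Sum>e'\<in>{e'. turn adj e e'}. \<mu> [e']) = z * \<mu> [e]"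
      using Tdual_single[OF True] by simp
    moreover have "(\<Sum>e'\<in>{e'. turn adj e e'}. single_edge_measure adj \<mu> e') =
        (\<Sum>e'\<in>{e'. turn adj e e'}. \<mu> [e'])"
      by (intro sum.cong) (auto simp: single_edge_measure_def dest: turn_in_oedges)
    ultimately show ?thesis using True by (simp add: Sminus_dual_def single_edge_measure_def)
  qed (simp add: Sminus_dual_def)
qed

lemma geometric_measure_eigenFA:
  assumes \<nu>: "Sminus_dual adj z \<nu> = 0"
  shows "geometric_measure z \<nu> \<in> eigenFA adj z"
proof -
  have eig: "(\<Sum>e'\<in>{e'. turn adj e e'}. \<nu> e') = z * \<nu> e" if "e \<in> oedges adj" for e
    using fun_cong[OF \<nu>, of e] that by (simp add: Sminus_dual_def)
  have FA: "geometric_measure z \<nu> \<in> FA adj"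
    unfolding FA_def
  proof (intro CollectI ballI)
    fix c assume c: "c \<in> postal adj"
    then have "c \<noteq> []" "last c \<in> oedges adj" by (auto simp: postal_iff)
    then show "geometric_measure z \<nu> c = (\<Sum>e\<in>{e. turn adj (last c) e}. geometric_measure z \<nu> (c @ [e]))"
      using eig z_nonzero
      by (simp add: geometric_measure_def flip: sum_divide_distrib) (cases "length c"; simp)
  qed
  have "Tdual adj (geometric_measure z \<nu>) c = z * geometric_measure z \<nu> c"
    if c: "c \<in> postal adj" for c
  proof -
    obtain a r where ar: "c = a # r" using c by (cases c) (auto simp: postal_iff)
    show ?thesis
    proof (cases r)
      case Nil
      then show ?thesis
        using c ar eig Tdual_single by (simp add: postal_single geometric_measure_def)
    next
      case (Cons b r')
      then show ?thesis
        using c ar Tdual_Cons_Cons[OF FA] z_nonzero by (simp add: geometric_measure_def)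
    qed
  qed
  then show ?thesis using FA unfolding eigenFA_def by blast
qed

interpretation S: transpose_pair "oedges adj" "Sminus adj z" "Sminus_dual adj z"
  by (rule transpose_pair_Sminus)

lemma pairing_path_fun:
  assumes "supported (oedges adj) g" and "Sminus adj z g = 0"
  shows "pairing adj (\<lambda>p. g (p 0)) \<mu> = dot_on (oedges adj) g (single_edge_measure adj \<mu>)"
  using pairing_Dm_1_dot_on[OF eigenD_Dm_1[OF z_nonzero path_fun_eigenD[OF assms(2)]]]
    first_edge_fun_path_fun[OF assms(1)] by simp

lemma pairing_geometric_measure:
  assumes "f \<in> eigenD adj z" and "supported (oedges adj) \<nu>"
  shows "pairing adj f (geometric_measure z \<nu>) = dot_on (oedges adj) (first_edge_fun adj f) \<nu>"
  using pairing_Dm_1_dot_on[OF eigenD_Dm_1[OF z_nonzero assms(1)]]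
    single_edge_measure_geometric[OF assms(2)] by simp

lemma nondegenerate_eigenD_iff:
  "(\<forall>f\<in>eigenD adj z. (\<forall>\<mu>\<in>eigenFA adj z. pairing adj f \<mu> = 0) \<longrightarrow> (\<forall>p\<in>paths adj. f p = 0)) \<longleftrightarrow>
   (\<forall>g. supported (oedges adj) g \<longrightarrow> Sminus adj z g = 0 \<longrightarrow>
      (\<forall>\<nu>. supported (oedges adj) \<nu> \<longrightarrow> Sminus_dual adj z \<nu> = 0 \<longrightarrow> dot_on (oedges adj) g \<nu> = 0) \<longrightarrow>
      g = 0)"
  (is "?eigen \<longleftrightarrow> ?kernel")
proof
  assume eigen: ?eigen
  show ?kernel
  proof (intro allI impI)
    fix g assume g: "supported (oedges adj) g" "Sminus adj z g = 0"
      and orth: "\<forall>\<nu>. supported (oedges adj) \<nu> \<longrightarrow> Sminus_dual adj z \<nu> = 0 \<longrightarrow> dot_on (oedges adj) g \<nu> = 0"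
    have "pairing adj (\<lambda>p. g (p 0)) \<mu> = 0" if "\<mu> \<in> eigenFA adj z" for \<mu>
      using pairing_path_fun[OF g]
        orth[rule_format, OF supported_single_edge_measure Sminus_dual_single_edge_measure[OF that]]
      by simp
    then have "\<forall>p\<in>paths adj. g (p 0) = 0" using eigen path_fun_eigenD[OF g(2)] by blast
    then show "g = 0"
      using extend_single by (intro supported_eq_zero[OF g(1)] ballI) metis
  qed
next
  assume kernel: ?kernel
  show ?eigen
  proof (intro ballI impI)
    fix f p assume f: "f \<in> eigenD adj z" and orth: "\<forall>\<mu>\<in>eigenFA adj z. pairing adj f \<mu> = 0"
      and p: "p \<in> paths adj"
    have "dot_on (oedges adj) (first_edge_fun adj f) \<nu> = 0"
      if "supported (oedges adj) \<nu>" "Sminus_dual adj z \<nu> = 0" for \<nu>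
      using orth pairing_geometric_measure[OF f that(1)] geometric_measure_eigenFA[OF that(2)] by simp
    then have "first_edge_fun adj f = 0"
      using kernel supported_first_edge_fun Sminus_first_edge_fun[OF f] by blast
    then show "f p = 0" using eigenD_eq_first_edge[OF f p] by simp
  qed
qed

lemma nondegenerate_eigenFA_iff:
  "(\<forall>\<mu>\<in>eigenFA adj z. (\<forall>f\<in>eigenD adj z. pairing adj f \<mu> = 0) \<longrightarrow> (\<forall>c\<in>postal adj. \<mu> c = 0)) \<longleftrightarrow>
   (\<forall>\<nu>. supported (oedges adj) \<nu> \<longrightarrow> Sminus_dual adj z \<nu> = 0 \<longrightarrow>
      (\<forall>g. supported (oedges adj) g \<longrightarrow> Sminus adj z g = 0 \<longrightarrow> dot_on (oedges adj) g \<nu> = 0) \<longrightarrow>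
      \<nu> = 0)"
  (is "?eigen \<longleftrightarrow> ?kernel")
proof
  assume eigen: ?eigen
  show ?kernel
  proof (intro allI impI)
    fix \<nu> assume \<nu>: "supported (oedges adj) \<nu>" "Sminus_dual adj z \<nu> = 0"
      and orth: "\<forall>g. supported (oedges adj) g \<longrightarrow> Sminus adj z g = 0 \<longrightarrow> dot_on (oedges adj) g \<nu> = 0"
    have \<mu>: "geometric_measure z \<nu> \<in> eigenFA adj z" by (rule geometric_measure_eigenFA[OF \<nu>(2)])
    have "pairing adj f (geometric_measure z \<nu>) = 0" if "f \<in> eigenD adj z" for f
      using pairing_geometric_measure[OF that \<nu>(1)]
        orth[rule_format, OF supported_first_edge_fun Sminus_first_edge_fun[OF that]] by simp
    then have "\<forall>c\<in>postal adj. geometric_measure z \<nu> c = 0" using eigen \<mu> by blast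
    then have "\<nu> e = 0" if "e \<in> oedges adj" for e
      using that by (auto simp: postal_single geometric_measure_def dest: bspec[of _ _ "[e]"])
    then show "\<nu> = 0" by (intro supported_eq_zero[OF \<nu>(1)] ballI)
  qed
next
  assume kernel: ?kernel
  show ?eigen
  proof (intro ballI impI)
    fix \<mu> c assume \<mu>: "\<mu> \<in> eigenFA adj z" and orth: "\<forall>f\<in>eigenD adj z. pairing adj f \<mu> = 0"
      and c: "c \<in> postal adj"
    have "dot_on (oedges adj) g (single_edge_measure adj \<mu>) = 0"
      if "supported (oedges adj) g" "Sminus adj z g = 0" for g
      using pairing_path_fun[OF that] orth[rule_format, OF path_fun_eigenD[OF that(2)]] by simp
    then have "single_edge_measure adj \<mu> = 0"
      using kernel supported_single_edge_measure Sminus_dual_single_edge_measure[OF \<mu>] by blast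
    then show "\<mu> c = 0" using eigenFA_eq_geometric[OF \<mu> c] by (simp add: geometric_measure_def)
  qed
qed

theorem pairing_nondegenerate_iff_kernel_stable:
  "pairing_nondegenerate adj z \<longleftrightarrow>
    (\<forall>h. supported (oedges adj) h \<longrightarrow> Sminus adj z (Sminus adj z h) = 0 \<longrightarrow> Sminus adj z h = 0)"
  unfolding pairing_nondegenerate_def nondegenerate_eigenD_iff nondegenerate_eigenFA_iff
  by (rule S.kernel_pairing_nondegenerate_iff)

end

lemma kerpow_eq: "kerpow adj z k = {g. supported (oedges adj) g \<and> (Sminus adj z ^^ k) g = 0}"
  by (simp add: kerpow_def supported_def zero_fun_def)

lemma kerpow_stable_iff:
  "(\<forall>k\<ge>1. kerpow adj z 1 = kerpow adj z k) \<longleftrightarrow>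
    (\<forall>h. supported (oedges adj) h \<longrightarrow> Sminus adj z (Sminus adj z h) = 0 \<longrightarrow> Sminus adj z h = 0)"
proof
  assume "\<forall>k\<ge>1. kerpow adj z 1 = kerpow adj z k"
  then have "kerpow adj z 2 = kerpow adj z 1" by (metis one_le_numeral)
  then show "\<forall>h. supported (oedges adj) h \<longrightarrow> Sminus adj z (Sminus adj z h) = 0 \<longrightarrow> Sminus adj z h = 0"
    by (auto simp: kerpow_eq numeral_2_eq_2 set_eq_iff)
next
  assume stable: "\<forall>h. supported (oedges adj) h \<longrightarrow> Sminus adj z (Sminus adj z h) = 0 \<longrightarrow> Sminus adj z h = 0"
  have "(Sminus adj z ^^ k) h = 0 \<longleftrightarrow> Sminus adj z h = 0"
    if "supported (oedges adj) h" "1 \<le> k" for h k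
  proof (rule funpow_eq_zero_iff_kernel_stable[where P = "supported (oedges adj)"])
    show "Sminus adj z 0 = 0" by (simp add: fun_eq_iff Sminus_def Sop_def)
    show "supported (oedges adj) (Sminus adj z h)" for h by (simp add: supported_def Sminus_def)
  qed (use stable that in auto)
  then show "\<forall>k\<ge>1. kerpow adj z 1 = kerpow adj z k" by (auto simp: kerpow_eq)
qed

lemma nonbacktracking_graph_if_degree_ge_2:
  assumes "finite V" and "\<And>u v. adj u v \<Longrightarrow> u \<in> V \<and> v \<in> V"
    and "\<And>v. v \<in> V \<Longrightarrow> card {u. adj v u} \<ge> 2"
  shows "nonbacktracking_graph adj"
proof
  show "finite (oedges adj)"
    by (rule finite_subset[of _ "V \<times> V"]) (use assms(1,2) in \<open>auto simp: oedges_def\<close>)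
next
  fix e assume "e \<in> oedges adj"
  then obtain u v where uv: "e = (u, v)" "adj u v" by (auto simp: oedges_def)
  then have "card {w. adj v w} \<ge> 2" using assms(2) by (intro assms(3)) blast
  then have "\<not> {w. adj v w} \<subseteq> {u}" using card_mono[of "{u}" "{w. adj v w}"] by auto
  then obtain w where "adj v w" "w \<noteq> u" by blast
  then have "turn adj (u, v) (v, w)" using uv by (auto simp: turn_def oedges_def)
  then show "\<exists>e'. turn adj e e'" using uv by blast
qed

theorem mainTheorem17:
  fixes V :: "'v set" and adj :: "'v \<Rightarrow> 'v \<Rightarrow> bool" and z :: complex
  assumes "finite V" and "V \<noteq> {}"
    and "\<And>u v. adj u v \<Longrightarrow> u \<in> V \<and> v \<in> V"
    and "\<And>u v. adj u v \<Longrightarrow> adj v u"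
    and "\<And>v. \<not> adj v v"
    and "\<And>u v. u \<in> V \<Longrightarrow> v \<in> V \<Longrightarrow> adj\<^sup>*\<^sup>* u v"
    and "\<And>v. v \<in> V \<Longrightarrow> card {u. adj v u} \<ge> 2"
    and "z \<noteq> 0"
  shows "pairing_nondegenerate adj z \<longleftrightarrow> (\<forall>k\<ge>1. kerpow adj z 1 = kerpow adj z k)"
proof -
  interpret nonbacktracking_eigen adj z
    by (intro nonbacktracking_eigen.intro nonbacktracking_eigen_axioms.intro
        nonbacktracking_graph_if_degree_ge_2[OF assms(1,3,7)] assms(8))
  show ?thesis unfolding kerpow_stable_iff by (rule pairing_nondegenerate_iff_kernel_stable)
qed

end
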